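(* Let $F(\Sigma)$ be a free group with $\Sigma=A\sqcup B$, and let $b\in\langle B\rangle$ and $z\in F(\Sigma)$ be freely reduced words. Suppose that $z$ begins and ends with letters in $A\sqcup A^{-1}$, that $zb$ is not a proper power, and that there are $i\in\mathbb{Z}$ and $g,h\in F(\Sigma)$ such that $(zb)^i=gzh$ with the word $g\cdot z\cdot h$ freely reduced. Then $i\geq 1$ and $g\in\langle zb\rangle$.
   Context: $F(\Sigma)$ is the free group on $\Sigma$. An element $w$ is a proper power if $w=u^n$ for some $u$ and $n\geq 2$. *)

theory Defs
  imports Main
begin

text \<open>Words in the free group F(Sigma): lists of letters (x, e) with x a generator and
  e = True meaning the inverse letter x^-1.\<close>

type_synonym 'a letter = "'a \<times> bool"
type_synonym 'a word = "'a letter list"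

definition inv_letter :: "'a letter \<Rightarrow> 'a letter" where
  "inv_letter l = (fst l, \<not> snd l)"

definition inv_word :: "'a word \<Rightarrow> 'a word" where
  "inv_word w = rev (map inv_letter w)"

fun freely_reduced :: "'a word \<Rightarrow> bool" where
  "freely_reduced [] = True"
| "freely_reduced [x] = True"
| "freely_reduced (x # y # xs) = (y \<noteq> inv_letter x \<and> freely_reduced (y # xs))"

fun push :: "'a letter \<Rightarrow> 'a word \<Rightarrow> 'a word" where
  "push x [] = [x]"
| "push x (y # ys) = (if y = inv_letter x then ys else x # y # ys)"

fun reduce :: "'a word \<Rightarrow> 'a word" where
  "reduce [] = []"
| "reduce (x # xs) = push x (reduce xs)"

definition fmult :: "'a word \<Rightarrow> 'a word \<Rightarrow> 'a word" where
  "fmult u v = reduce (u @ v)"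

definition fpow :: "'a word \<Rightarrow> int \<Rightarrow> 'a word" where
  "fpow w i = (if 0 \<le> i then reduce (concat (replicate (nat i) w))
               else reduce (concat (replicate (nat (- i)) (inv_word w))))"

definition in_free_group :: "'a set \<Rightarrow> 'a word \<Rightarrow> bool" where
  "in_free_group S w \<longleftrightarrow> freely_reduced w \<and> fst ` set w \<subseteq> S"

inductive in_gen_subgroup :: "'a word set \<Rightarrow> 'a word \<Rightarrow> bool" for X where
  gen_one: "in_gen_subgroup X []"
| gen_base: "x \<in> X \<Longrightarrow> in_gen_subgroup X x"
| gen_inv: "in_gen_subgroup X u \<Longrightarrow> in_gen_subgroup X (inv_word u)"
| gen_mult: "in_gen_subgroup X u \<Longrightarrow> in_gen_subgroup X v \<Longrightarrow> in_gen_subgroup X (fmult u v)"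

definition gens :: "'a set \<Rightarrow> 'a word set" where
  "gens B = {[(x, False)] | x. x \<in> B}"

definition proper_power :: "'a set \<Rightarrow> 'a word \<Rightarrow> bool" where
  "proper_power S w \<longleftrightarrow> (\<exists>u n. in_free_group S u \<and> n \<ge> 2 \<and> w = fpow u (int n))"

end

theory Submission
  imports Defs
begin

text \<open>
  Put w = z b. Since z begins and ends with letters of A and b consists of letters of B, w is
  freely reduced, and cyclically reduced unless b is empty. Then the reduced form of w^i is the
  plain concatenation of |i| copies of w (for i > 0) or of w^-1 = b^-1 z^-1 (for i < 0), and z
  occurs in it. For i < 0 this occurrence starts inside a copy of z^-1, because z begins with an
  A-letter; so some nonempty prefix of z is its own inverse, which is impossible in a reduced word.
  For i > 0, an occurrence not aligned with the copies of w starts inside a copy of z and, as it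
  ends with an A-letter, reaches into the next copy of z. This yields z = y y' z2 = z2 b y with
  y, z2 beginning and ending with A-letters, and a Euclid-type descent on such equations gives
  y' = b. Then w = (y b)(z2 b) with commuting factors, so w is a proper power. Hence the
  occurrence is aligned and g is a power of w. If b is empty and z is not cyclically reduced,
  write z = x c x^-1 with c cyclically reduced, so that z^i = x c^i x^-1; comparing the letters
  just before and after the occurrence of z forces g = 1, and for i < 0 also c = c^-1, which is
  impossible.
\<close>

section \<open>Combinatorics of lists\<close>

lemma append_eq_append_le:
  assumes "xs @ ys = zs @ ts" "length xs \<le> length zs"
  shows "\<exists>us. zs = xs @ us \<and> ys = us @ ts"
  using assms by (auto simp: append_eq_append_conv2)

lemma append_eq_append_hd_notin_fst:
  assumes "u @ v = x @ y" "v \<noteq> []" "hd v \<notin> set x"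
  shows "\<exists>y'. y = y' @ v"
proof -
  obtain us where "u = x @ us \<and> us @ v = y \<or> u @ us = x \<and> v = us @ y"
    using assms(1) append_eq_append_conv2 by blast
  moreover have "us = []" if "u @ us = x" "v = us @ y"
    using that assms(3) by (cases us) auto
  ultimately show ?thesis by auto
qed

lemma append_eq_append_hd_notin_snd:
  assumes "u @ v = x @ y" "v \<noteq> []" "hd v \<notin> set y"
  shows "\<exists>x'. x = u @ x' \<and> v = x' @ y"
proof -
  obtain us where "u = x @ us \<and> us @ v = y \<or> u @ us = x \<and> v = us @ y"
    using assms(1) append_eq_append_conv2 by blast
  moreover have False if "us @ v = y"
    using that assms(2,3) by (cases us) (auto simp: hd_in_set)
  ultimately show ?thesis by auto
qed

lemma hd_concat_replicate: "0 < k \<Longrightarrow> hd (concat (replicate k c)) = hd c"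
  by (cases k) (auto simp: hd_append)

lemma last_concat_replicate: "0 < k \<Longrightarrow> last (concat (replicate k c)) = last c"
  by (induction k) (auto simp: last_append)

lemma append_eq_concat_replicate:
  assumes "g @ v = concat (replicate k w)" "v \<noteq> []"
  shows "\<exists>q u u' j. g = concat (replicate q w) @ u \<and> w = u @ u' \<and> u' \<noteq> [] \<and>
           v = u' @ concat (replicate j w)"
  using assms
proof (induction k arbitrary: g)
  case (Suc k)
  then have eq: "g @ v = w @ concat (replicate k w)"
    by simp
  show ?case
  proof (cases "length g < length w")
    case True
    then obtain u' where "w = g @ u'" "v = u' @ concat (replicate k w)"
      using append_eq_append_le[OF eq less_imp_le[OF True]] by blast
    moreover have "u' \<noteq> []"
      using calculation(1) True by auto
    ultimately have "g = concat (replicate 0 w) @ g \<and> w = g @ u' \<and> u' \<noteq> [] \<and>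
        v = u' @ concat (replicate k w)"
      by simp
    then show ?thesis
      by blast
  next
    case False
    then have "length w \<le> length g"
      by simp
    then obtain us where g: "g = w @ us" and "us @ v = concat (replicate k w)"
      using append_eq_append_le[OF eq[symmetric]] by auto
    then obtain q u u' j where "us = concat (replicate q w) @ u" "w = u @ u'" "u' \<noteq> []"
        "v = u' @ concat (replicate j w)"
      using Suc.IH Suc.prems(2) by blast
    moreover have "g = concat (replicate (Suc q) w) @ u"
      using g calculation(1) by simp
    ultimately show ?thesis
      by blast
  qed
qed simp

lemma swap_append_shift:
  assumes eq: "u @ x @ v = v @ y @ u" and "u \<noteq> []" "P (last v)" "\<forall>l\<in>set x. \<not> P l"
    and shorter: "length u < length v"
  shows "\<exists>v'. v = u @ x @ v' \<and> v' \<noteq> [] \<and> hd v' = hd u \<and> u @ x @ v' = v' @ y @ u"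
proof -
  obtain r where v: "v = u @ r" and "x @ v = r @ y @ u"
    using append_eq_append_le[OF eq] shorter by auto
  then have r_eq: "x @ u @ r = r @ y @ u" and "r \<noteq> []"
    using shorter by auto
  have "length x < length r"
  proof (rule ccontr)
    assume "\<not> length x < length r"
    then obtain x' where "x = r @ x'"
      using append_eq_append_le[OF r_eq[symmetric]] by auto
    then have "last r \<in> set x"
      using \<open>r \<noteq> []\<close> by simp
    then show False
      using assms(3,4) v \<open>r \<noteq> []\<close> by simp
  qed
  then obtain v' where r: "r = x @ v'" and "u @ r = v' @ y @ u"
    using append_eq_append_le[OF r_eq] by auto
  then have swap: "u @ x @ v' = v' @ y @ u" and "v' \<noteq> []"
    using \<open>length x < length r\<close> by auto
  moreover have "hd v' = hd u"
    using arg_cong[OF swap, of hd] \<open>u \<noteq> []\<close> \<open>v' \<noteq> []\<close> by simp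
  ultimately show ?thesis
    using v r by blast
qed

lemma swap_append_middle_eq_avoiding:
  assumes "u @ x @ v = v @ y @ u" "u \<noteq> []" "v \<noteq> []"
    and "P (hd u)" "P (last u)" "P (hd v)" "P (last v)"
    and "\<forall>l\<in>set x. \<not> P l" "\<forall>l\<in>set y. \<not> P l"
  shows "x = y"
  using assms
proof (induction "length u + length v" arbitrary: u v x y rule: less_induct)
  case less
  consider "length u = length v" | "length u < length v" | "length v < length u"
    by linarith
  then show ?case
  proof cases
    case 1
    then have "u = v" "x @ v = y @ u"
      using less.prems(1) append_eq_append_conv by blast+
    then show ?thesis
      by simp
  next
    case 2
    then obtain v' where v: "v = u @ x @ v'" and "v' \<noteq> []" "hd v' = hd u"
      and swap': "u @ x @ v' = v' @ y @ u"
      using swap_append_shift[of u x v y P] less.prems(1,2,7,8) by blast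
    have shorter: "length u + length v' < length u + length v"
      using v less.prems(2) by simp
    have "P (hd v')" "P (last v')"
      using \<open>hd v' = hd u\<close> less.prems(4,7) v \<open>v' \<noteq> []\<close> by simp_all
    then show ?thesis
      by (rule less.hyps[OF shorter swap' less.prems(2) \<open>v' \<noteq> []\<close> less.prems(4,5) _ _ less.prems(8,9)])
  next
    case 3
    then obtain u' where u: "u = v @ y @ u'" and "u' \<noteq> []" "hd u' = hd v"
      and swap': "v @ y @ u' = u' @ x @ v"
      using swap_append_shift[of v y u x P] less.prems(1,3,5,9) by metis
    have shorter: "length v + length u' < length u + length v"
      using u less.prems(3) by simp
    have "P (hd u')" "P (last u')"
      using \<open>hd u' = hd v\<close> less.prems(5,6) u \<open>u' \<noteq> []\<close> by simp_all
    then have "y = x"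
      by (rule less.hyps[OF shorter swap' less.prems(3) \<open>u' \<noteq> []\<close> less.prems(6,7) _ _ less.prems(9,8)])
    then show ?thesis ..
  qed
qed

lemma swap_append_middle_eq:
  assumes swap: "u @ x @ v = v @ y @ u" and "u \<noteq> []" "v \<noteq> []"
    and "P (hd u)" "P (last u)" "P (hd v)" "P (last v)" and y: "\<forall>l\<in>set y. \<not> P l"
  shows "x = y"
proof -
  have "length (filter P (u @ x @ v)) = length (filter P (v @ y @ u))"
    using swap by simp
  then have "filter P x = []"
    using y by (simp add: filter_empty_conv)
  then have "\<forall>l\<in>set x. \<not> P l"
    by (simp add: filter_empty_conv)
  then show ?thesis
    using swap_append_middle_eq_avoiding[OF assms(1-7) _ y] by blast
qed

section \<open>Inverse words and free reduction\<close>

lemma inv_letter_inv [simp]: "inv_letter (inv_letter l) = l"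
  by (simp add: inv_letter_def)

lemma inv_letter_neq [simp]: "inv_letter l \<noteq> l" "l \<noteq> inv_letter l"
  by (cases l; simp add: inv_letter_def)+

lemma fst_inv_letter [simp]: "fst (inv_letter l) = fst l"
  by (simp add: inv_letter_def)

lemma inv_word_Nil [simp]: "inv_word [] = []"
  and inv_word_Cons: "inv_word (a # u) = inv_word u @ [inv_letter a]"
  and inv_word_append [simp]: "inv_word (u @ v) = inv_word v @ inv_word u"
  and inv_word_inv [simp]: "inv_word (inv_word u) = u"
  and length_inv_word [simp]: "length (inv_word u) = length u"
  and inv_word_eq_Nil_iff [simp]: "inv_word u = [] \<longleftrightarrow> u = []"
  and fst_set_inv_word [simp]: "fst ` set (inv_word u) = fst ` set u"
  by (simp_all add: inv_word_def rev_map comp_def image_image)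

lemma hd_inv_word: "u \<noteq> [] \<Longrightarrow> hd (inv_word u) = inv_letter (last u)"
  by (simp add: inv_word_def hd_rev last_map)

lemma freely_reduced_append:
  "freely_reduced (u @ v) \<longleftrightarrow> freely_reduced u \<and> freely_reduced v \<and>
     (u \<noteq> [] \<longrightarrow> v \<noteq> [] \<longrightarrow> hd v \<noteq> inv_letter (last u))"
proof (induction u rule: freely_reduced.induct)
  case (2 x)
  then show ?case by (cases v) auto
qed auto

lemma freely_reduced_inv_word [simp]: "freely_reduced (inv_word u) \<longleftrightarrow> freely_reduced u"
proof -
  have "freely_reduced (inv_word u)" if "freely_reduced u" for u :: "'a word"
    using that
    by (induction u rule: freely_reduced.induct) (auto simp: inv_word_Cons freely_reduced_append)
  then show ?thesis by (metis inv_word_inv)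
qed

lemma inv_word_fixed_imp_Nil:
  assumes "freely_reduced u" "inv_word u = u"
  shows "u = []"
  using assms
proof (induction "length u" arbitrary: u rule: less_induct)
  case less
  show ?case
  proof (cases u)
    case (Cons a r)
    show ?thesis
    proof (cases r rule: rev_cases)
      case Nil
      then show ?thesis using Cons less.prems(2) by (simp add: inv_word_Cons)
    next
      case (snoc m l)
      have "l = inv_letter a" "inv_word m = m"
        using less.prems(2) by (auto simp: Cons snoc inv_word_Cons)
      moreover have "freely_reduced m"
        using less.prems(1) freely_reduced_append[of "a # m" "[l]"] freely_reduced_append[of "[a]" m]
        by (simp add: Cons snoc)
      ultimately have "m = []" using less.hyps[of m] by (simp add: Cons snoc)
      then show ?thesis using less.prems(1) \<open>l = inv_letter a\<close> by (simp add: Cons snoc)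
    qed
  qed simp
qed

lemma freely_reduced_push: "freely_reduced u \<Longrightarrow> freely_reduced (push a u)"
  by (cases u) (auto simp: freely_reduced_append[of "[_]", simplified])

lemma freely_reduced_reduce: "freely_reduced (reduce u)"
  by (induction u) (auto intro: freely_reduced_push)

lemma reduce_freely_reduced: "freely_reduced u \<Longrightarrow> reduce u = u"
proof (induction u)
  case (Cons a u)
  then show ?case
    using freely_reduced_append[of "[a]" u] by (cases u) auto
qed simp

lemma reduce_append_reduce: "reduce (u @ reduce v) = reduce (u @ v)"
  by (induction u) (simp_all add: reduce_freely_reduced freely_reduced_reduce)

lemma push_inv_push: "freely_reduced u \<Longrightarrow> push (inv_letter a) (push a u) = u"
  by (cases u rule: freely_reduced.cases) auto

lemma reduce_inv_cancel: "reduce (u @ inv_word x @ x @ v) = reduce (u @ v)"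
proof -
  have "reduce (inv_word x @ x @ v) = reduce v" for v
  proof (induction x arbitrary: v)
    case (Cons a x)
    have "reduce (inv_word (a # x) @ (a # x) @ v) = reduce (inv_word x @ reduce ([inv_letter a, a] @ x @ v))"
      using reduce_append_reduce[of "inv_word x" "[inv_letter a, a] @ x @ v"] by (simp add: inv_word_Cons)
    also have "reduce ([inv_letter a, a] @ x @ v) = reduce (x @ v)"
      by (simp add: push_inv_push freely_reduced_reduce)
    finally show ?case by (simp add: reduce_append_reduce Cons.IH)
  qed simp
  then show ?thesis by (metis reduce_append_reduce)
qed

lemma reduce_cancel_inv: "reduce (u @ x @ inv_word x @ v) = reduce (u @ v)"
  using reduce_inv_cancel[of u "inv_word x"] by simp

lemma set_reduce: "set (reduce u) \<subseteq> set u"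
proof (induction u)
  case (Cons a u)
  have "set (push a v) \<subseteq> insert a (set v)" for v
    by (cases v) auto
  then show ?case
    using Cons.IH by fastforce
qed simp

section \<open>Cyclically reduced words and their powers\<close>

definition cyclically_reduced :: "'a word \<Rightarrow> bool" where
  "cyclically_reduced c \<longleftrightarrow> freely_reduced (c @ c)"

lemma cyclically_reduced_iff:
  "cyclically_reduced c \<longleftrightarrow> freely_reduced c \<and> (c \<noteq> [] \<longrightarrow> hd c \<noteq> inv_letter (last c))"
  by (auto simp: cyclically_reduced_def freely_reduced_append)

lemma cyclically_reduced_inv_word [simp]:
  "cyclically_reduced (inv_word c) \<longleftrightarrow> cyclically_reduced c"
  by (metis cyclically_reduced_def freely_reduced_inv_word inv_word_append)

lemma freely_reduced_concat_replicate:
  "cyclically_reduced c \<Longrightarrow> freely_reduced (concat (replicate k c))"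
proof (induction k)
  case (Suc k)
  then show ?case
    by (cases "k = 0") (auto simp: cyclically_reduced_iff freely_reduced_append hd_concat_replicate)
qed simp

lemma reduce_concat_replicate_conj:
  assumes "freely_reduced (x @ c @ inv_word x)" "cyclically_reduced c" "0 < k"
  shows "reduce (concat (replicate k (x @ c @ inv_word x))) = x @ concat (replicate k c) @ inv_word x"
proof -
  let ?X = "x @ c @ inv_word x"
  have "reduce (concat (replicate k ?X)) = reduce (x @ concat (replicate k c) @ inv_word x)" for k
  proof (induction k)
    case 0
    then show ?case using reduce_cancel_inv[of "[]" x "[]"] by simp
  next
    case (Suc k)
    have "reduce (concat (replicate (Suc k) ?X)) = reduce (?X @ reduce (concat (replicate k ?X)))"
      using reduce_append_reduce[of ?X "concat (replicate k ?X)"] by simp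
    also have "\<dots> = reduce ((x @ c) @ inv_word x @ x @ concat (replicate k c) @ inv_word x)"
      using reduce_append_reduce[of ?X "x @ concat (replicate k c) @ inv_word x"] by (simp add: Suc.IH)
    also have "\<dots> = reduce (x @ concat (replicate (Suc k) c) @ inv_word x)"
      by (simp only: reduce_inv_cancel) simp
    finally show ?case .
  qed
  moreover have "freely_reduced (x @ concat (replicate k c) @ inv_word x)"
  proof (cases "c = []")
    case False
    then show ?thesis
      using assms freely_reduced_concat_replicate[OF assms(2), of k]
      by (auto simp: freely_reduced_append hd_concat_replicate last_concat_replicate)
  qed (use assms in simp)
  ultimately show ?thesis by (simp add: reduce_freely_reduced)
qed

lemma fpow_conj_pos:
  assumes "freely_reduced (x @ c @ inv_word x)" "cyclically_reduced c" "0 < i"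
  shows "fpow (x @ c @ inv_word x) i = x @ concat (replicate (nat i) c) @ inv_word x"
  using assms by (simp add: fpow_def reduce_concat_replicate_conj)

lemma fpow_conj_neg:
  assumes "freely_reduced (x @ c @ inv_word x)" "cyclically_reduced c" "i < 0"
  shows "fpow (x @ c @ inv_word x) i = x @ concat (replicate (nat (- i)) (inv_word c)) @ inv_word x"
  using assms fpow_conj_pos[of x "inv_word c" "- i"] freely_reduced_inv_word[of "x @ c @ inv_word x"]
  by (simp add: fpow_def)

lemma ex_conj_cyclically_reduced:
  "freely_reduced z \<Longrightarrow> z \<noteq> [] \<Longrightarrow> \<exists>x c. z = x @ c @ inv_word x \<and> cyclically_reduced c \<and> c \<noteq> []"
proof (induction "length z" arbitrary: z rule: less_induct)
  case less
  show ?case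
  proof (cases "cyclically_reduced z")
    case True
    then show ?thesis using less.prems(2) by (intro exI[of _ "[]"] exI[of _ z]) simp
  next
    case False
    then have last_z: "last z = inv_letter (hd z)"
      using less.prems by (simp add: cyclically_reduced_iff)
    obtain a r where "z = a # r"
      using less.prems(2) by (cases z) auto
    moreover have "r \<noteq> []"
      using last_z \<open>z = a # r\<close> by auto
    ultimately obtain m where z: "z = a # m @ [inv_letter a]"
      using last_z by (cases r rule: rev_cases) auto
    then have "freely_reduced m" "m \<noteq> []"
      using less.prems(1) freely_reduced_append[of "a # m"] freely_reduced_append[of "[a]" m]
      by auto
    moreover have "length m < length z"
      using z by simp
    ultimately obtain x c where "m = x @ c @ inv_word x" "cyclically_reduced c" "c \<noteq> []"
      using less.hyps by blast
    moreover have "z = (a # x) @ c @ inv_word (a # x)"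
      using z \<open>m = x @ c @ inv_word x\<close> by (simp add: inv_word_Cons)
    ultimately show ?thesis by blast
  qed
qed

section \<open>Subgroups and proper powers\<close>

lemma letters_in_gen_subgroup_gens:
  "in_gen_subgroup (gens B) u \<Longrightarrow> fst ` set u \<subseteq> B"
proof (induction rule: in_gen_subgroup.induct)
  case (gen_base x)
  then show ?case by (auto simp: gens_def)
next
  case (gen_mult u v)
  then show ?case
    using set_reduce[of "u @ v"] unfolding fmult_def by fastforce
qed auto

lemma concat_replicate_in_gen_subgroup:
  assumes "cyclically_reduced w"
  shows "in_gen_subgroup {w} (concat (replicate q w))"
proof (induction q)
  case (Suc q)
  have "fmult w (concat (replicate q w)) = concat (replicate (Suc q) w)"
    using reduce_freely_reduced[OF freely_reduced_concat_replicate[OF assms, of "Suc q"]]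
    by (simp add: fmult_def)
  then show ?case
    using gen_mult[OF gen_base Suc.IH] by simp
qed (simp add: gen_one)

lemma proper_power_if_commuting_factors:
  assumes "in_free_group S (s @ t)" "s \<noteq> []" "t \<noteq> []" "s @ t = t @ s"
  shows "proper_power S (s @ t)"
proof -
  obtain N r where "1 < N" and r: "concat (replicate N r) = s @ t"
    using comm_append_is_replicate[OF assms(2-4)] by blast
  then have st: "s @ t = r @ concat (replicate (N - 1) r)"
    by (cases N) simp_all
  have "freely_reduced r"
    using assms(1) st by (metis freely_reduced_append in_free_group_def)
  moreover have "fst ` set r \<subseteq> S"
    using assms(1) unfolding in_free_group_def st by auto
  ultimately have "in_free_group S r"
    by (simp add: in_free_group_def)
  moreover have "fpow r (int N) = s @ t"
    using r assms(1) by (simp add: fpow_def in_free_group_def reduce_freely_reduced)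
  ultimately show ?thesis
    unfolding proper_power_def using \<open>1 < N\<close> by (metis Suc_1 Suc_leI)
qed

section \<open>Occurrences of a word in powers\<close>

lemma power_self_overlap:
  assumes z: "z = u @ z2" and "u \<noteq> []" "last z \<notin> set b"
    and zh: "z @ h = z2 @ b @ concat (replicate j (z @ b))"
  shows "\<exists>y y'. y \<noteq> [] \<and> u = y @ y' \<and> z = z2 @ b @ y"
proof -
  have zh': "z @ h = (z2 @ b) @ concat (replicate j (z @ b))"
    using zh by simp
  have "length (z2 @ b) < length z"
  proof (rule ccontr)
    assume "\<not> length (z2 @ b) < length z"
    then obtain p where "z2 @ b = z @ p"
      using append_eq_append_le[OF zh'] by auto
    moreover have "length z2 \<le> length z"
      using z by simp
    ultimately obtain b1 where "z = z2 @ b1" "b = b1 @ p"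
      using append_eq_append_le by blast
    moreover have "b1 \<noteq> []"
      using calculation(1) z \<open>u \<noteq> []\<close> by auto
    ultimately have "last z \<in> set b"
      by simp
    then show False
      using assms(3) by simp
  qed
  then obtain y where zy: "z = (z2 @ b) @ y" and yh: "concat (replicate j (z @ b)) = y @ h"
    using append_eq_append_le[OF zh'[symmetric]] by auto
  have "y \<noteq> []"
    using zy \<open>length (z2 @ b) < length z\<close> by auto
  then have "y @ h = u @ z2 @ b @ concat (replicate (j - 1) (z @ b))"
    using yh z by (cases j) auto
  moreover have "length y \<le> length u"
    using arg_cong[OF z, of length] arg_cong[OF zy, of length] by simp
  ultimately obtain y' where "u = y @ y'"
    using append_eq_append_le by blast
  then show ?thesis
    using zy \<open>y \<noteq> []\<close> by auto
qed

lemma misaligned_factor_of_power_periodic: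
  assumes b_A: "\<forall>l\<in>set b. fst l \<notin> A" and z_A: "fst (hd z) \<in> A" "fst (last z) \<in> A"
    and z: "z = u @ z2" "u \<noteq> []" "z2 \<noteq> []" "hd z2 = hd z"
    and zh: "z @ h = z2 @ b @ concat (replicate j (z @ b))"
  shows "\<exists>s t. s \<noteq> [] \<and> t \<noteq> [] \<and> s @ t = t @ s \<and> z @ b = s @ t"
proof -
  have "last z \<notin> set b"
    using b_A z_A(2) by auto
  then obtain y y' where "y \<noteq> []" and u: "u = y @ y'" and z': "z = z2 @ b @ y"
    using power_self_overlap[OF z(1,2) _ zh] by blast
  have swap: "y @ y' @ z2 = z2 @ b @ y"
    using z(1) z' u by simp
  have "hd y = hd z" "last z2 = last z"
    using z(1,3) u \<open>y \<noteq> []\<close> by simp_all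
  moreover have "last y = last z"
    using z' \<open>y \<noteq> []\<close> by simp
  ultimately have "y' = b"
    using swap_append_middle_eq[OF swap \<open>y \<noteq> []\<close> z(3), of "\<lambda>l. fst l \<in> A"] z(4) z_A b_A
    by simp
  then have "(y @ b) @ (z2 @ b) = (z2 @ b) @ (y @ b)" "z @ b = (y @ b) @ (z2 @ b)"
    using swap z(1) u by simp_all
  then show ?thesis
    using \<open>y \<noteq> []\<close> \<open>z2 \<noteq> []\<close> by blast
qed

lemma factor_of_power_aligned_or_periodic:
  assumes b_A: "\<forall>l\<in>set b. fst l \<notin> A"
    and "z \<noteq> []" "fst (hd z) \<in> A" "fst (last z) \<in> A"
    and "g @ z @ h = concat (replicate k (z @ b))"
  shows "(\<exists>q. g = concat (replicate q (z @ b))) \<or>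
    (\<exists>s t. s \<noteq> [] \<and> t \<noteq> [] \<and> s @ t = t @ s \<and> z @ b = s @ t)"
proof -
  obtain q u u' j where g: "g = concat (replicate q (z @ b)) @ u" and w: "u @ u' = z @ b"
    and "u' \<noteq> []" and zh: "z @ h = u' @ concat (replicate j (z @ b))"
    using append_eq_concat_replicate[OF assms(5)] \<open>z \<noteq> []\<close> by force
  show ?thesis
  proof (cases "u = []")
    case True
    then have "g = concat (replicate q (z @ b))"
      using g by simp
    then show ?thesis
      by blast
  next
    case False
    have "hd u' = hd z"
      using arg_cong[OF zh, of hd] \<open>z \<noteq> []\<close> \<open>u' \<noteq> []\<close> by simp
    then have "hd u' \<notin> set b"
      using b_A assms(3) by auto
    then obtain z2 where z: "z = u @ z2" and u': "u' = z2 @ b"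
      using append_eq_append_hd_notin_snd[OF w \<open>u' \<noteq> []\<close>] by blast
    have "z2 \<noteq> []"
      using \<open>hd u' \<notin> set b\<close> \<open>u' \<noteq> []\<close> u' by (auto simp: hd_in_set)
    then have "hd z2 = hd z"
      using \<open>hd u' = hd z\<close> u' by simp
    then show ?thesis
      using misaligned_factor_of_power_periodic[OF b_A assms(3,4) z False \<open>z2 \<noteq> []\<close>] zh u'
      by simp
  qed
qed

lemma no_factor_of_inverse_power:
  assumes b_A: "\<forall>l\<in>set b. fst l \<notin> A" and "freely_reduced z" "z \<noteq> []" "fst (hd z) \<in> A"
  shows "g @ z @ h \<noteq> concat (replicate k (inv_word (z @ b)))"
proof
  assume "g @ z @ h = concat (replicate k (inv_word (z @ b)))"
  then obtain u u' j where "inv_word (z @ b) = u @ u'" and "u' \<noteq> []"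
    and zh: "z @ h = u' @ concat (replicate j (inv_word (z @ b)))"
    using append_eq_concat_replicate \<open>z \<noteq> []\<close> by blast
  then have W: "u @ u' = inv_word b @ inv_word z"
    by simp
  have "hd u' = hd z"
    using arg_cong[OF zh, of hd] \<open>z \<noteq> []\<close> \<open>u' \<noteq> []\<close> by simp
  have "hd u' \<notin> set (inv_word b)"
  proof
    assume "hd u' \<in> set (inv_word b)"
    then have "fst (hd u') \<in> fst ` set b"
      by (metis fst_set_inv_word image_eqI)
    then show False
      using b_A assms(4) \<open>hd u' = hd z\<close> by auto
  qed
  then obtain y where "inv_word z = y @ u'"
    using append_eq_append_hd_notin_fst[OF W \<open>u' \<noteq> []\<close>] by blast
  then have z: "z = inv_word u' @ inv_word y"
    by (metis inv_word_append inv_word_inv)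
  have "u' = take (length u') (z @ h)"
    using zh by simp
  also have "\<dots> = inv_word u'"
    using z by simp
  finally have "u' = inv_word u'" .
  moreover have "freely_reduced u'"
    using z assms(2) by (simp add: freely_reduced_append)
  ultimately show False
    using inv_word_fixed_imp_Nil \<open>u' \<noteq> []\<close> by metis
qed

lemma misaligned_factor_of_conj_power:
  assumes z: "freely_reduced (x @ c @ inv_word x)" and "freely_reduced d"
    and "x \<noteq> []" "c \<noteq> []" and cd: "length c = length d"
    and xD: "x @ concat (replicate k d) = g @ x @ c @ t" and t: "inv_word x @ h = t @ inv_word x"
  shows "g = []"
proof (rule ccontr)
  assume "g \<noteq> []"
  have hd_t: "hd t = inv_letter (last x)" if "t \<noteq> []"
    using arg_cong[OF t[symmetric], of hd] that \<open>x \<noteq> []\<close> by (simp add: hd_inv_word)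
  have "x @ concat (replicate k d) = (g @ x) @ (c @ t)" "length x \<le> length (g @ x)"
    using xD by simp_all
  then obtain s where gx: "g @ x = x @ s" and D: "concat (replicate k d) = s @ c @ t"
    using append_eq_append_le by blast
  have "s \<noteq> []"
    using arg_cong[OF gx, of length] \<open>g \<noteq> []\<close> by auto
  then have "last s = last x"
    using arg_cong[OF gx, of last] \<open>x \<noteq> []\<close> by simp
  obtain q u u' j where s: "s = concat (replicate q d) @ u" and d: "d = u @ u'" "u' \<noteq> []"
    and ct: "c @ t = u' @ concat (replicate j d)"
    using append_eq_concat_replicate[OF D[symmetric]] \<open>c \<noteq> []\<close> by blast
  show False
  proof (cases "u = []")
    case True
    then have "c = d"
      using ct cd d by (cases j) (auto simp: append_eq_append_conv)
    moreover have "0 < q"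
      using s True \<open>s \<noteq> []\<close> by (cases q) auto
    then have "last s = last d"
      using s True by (simp add: last_concat_replicate)
    ultimately show False
      using z \<open>last s = last x\<close> \<open>x \<noteq> []\<close> \<open>c \<noteq> []\<close> by (simp add: freely_reduced_append hd_inv_word)
  next
    case False
    have "0 < j"
      using arg_cong[OF ct, of length] cd d False by (cases j) auto
    then have "c @ t = (u' @ u) @ (u' @ concat (replicate (j - 1) d))"
      using ct d by (cases j) simp_all
    then have "t = u' @ concat (replicate (j - 1) d)"
      using cd d append_eq_append_conv[of c "u' @ u"] by simp
    then have "hd u' = inv_letter (last u)"
      using hd_t \<open>u' \<noteq> []\<close> \<open>last s = last x\<close> s False by simp
    then show False
      using \<open>freely_reduced d\<close> d False by (simp add: freely_reduced_append)
  qed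
qed

lemma factor_of_conj_power:
  assumes "freely_reduced (x @ c @ inv_word x)" "freely_reduced d"
    and "x \<noteq> []" "c \<noteq> []" and cd: "length c = length d"
    and eq: "g @ (x @ c @ inv_word x) @ h = x @ concat (replicate k d) @ inv_word x"
  shows "g = [] \<and> c = d"
proof -
  let ?D = "concat (replicate k d)"
  have "(g @ x @ c) @ (inv_word x @ h) = (x @ ?D) @ inv_word x"
    using eq by simp
  moreover have "length (g @ x @ c) \<le> length (x @ ?D)"
    using arg_cong[OF eq, of length] by simp
  ultimately obtain t where "x @ ?D = (g @ x @ c) @ t" and t: "inv_word x @ h = t @ inv_word x"
    using append_eq_append_le by blast
  then have xD: "x @ ?D = g @ x @ c @ t"
    by simp
  then have "g = []"
    using misaligned_factor_of_conj_power[OF assms(1-5) _ t] by blast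
  then have "?D = c @ t"
    using xD by simp
  moreover have "0 < k"
    using calculation \<open>c \<noteq> []\<close> by (cases k) auto
  ultimately show ?thesis
    using \<open>g = []\<close> cd by (cases k) (auto simp: append_eq_append_conv)
qed

lemma factor_of_power_cyclic:
  assumes b_A: "\<forall>l\<in>set b. fst l \<notin> A"
    and "freely_reduced z" "z \<noteq> []" "fst (hd z) \<in> A" "fst (last z) \<in> A"
    and w: "cyclically_reduced (z @ b)" and pow: "fpow (z @ b) i = g @ z @ h"
  shows "0 < i \<and> ((\<exists>q. g = concat (replicate q (z @ b))) \<or>
           (\<exists>s t. s \<noteq> [] \<and> t \<noteq> [] \<and> s @ t = t @ s \<and> z @ b = s @ t))"
proof -
  have "freely_reduced (z @ b)"
    using w by (simp add: cyclically_reduced_iff)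
  have "i \<noteq> 0"
    using pow \<open>z \<noteq> []\<close> by (auto simp: fpow_def)
  moreover have "\<not> i < 0"
  proof
    assume "i < 0"
    then have "g @ z @ h = concat (replicate (nat (- i)) (inv_word (z @ b)))"
      using pow fpow_conj_neg[of "[]" "z @ b" i] \<open>freely_reduced (z @ b)\<close> w by simp
    then show False
      using no_factor_of_inverse_power assms(1-4) by blast
  qed
  ultimately have "0 < i"
    by simp
  then have "g @ z @ h = concat (replicate (nat i) (z @ b))"
    using pow fpow_conj_pos[of "[]" "z @ b" i] \<open>freely_reduced (z @ b)\<close> w by simp
  then show ?thesis
    using factor_of_power_aligned_or_periodic[OF b_A assms(3-5)] \<open>0 < i\<close> by blast
qed

lemma factor_of_power_noncyclic:
  assumes "freely_reduced z" "z \<noteq> []" "\<not> cyclically_reduced z" and pow: "fpow z i = g @ z @ h"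
  shows "0 < i \<and> g = []"
proof -
  obtain x c where z: "z = x @ c @ inv_word x" and c: "cyclically_reduced c" "c \<noteq> []"
    using ex_conj_cyclically_reduced assms(1,2) by blast
  have "x \<noteq> []"
    using z c assms(3) by auto
  have fr_c: "freely_reduced c"
    using c by (simp add: cyclically_reduced_iff)
  have fr_z: "freely_reduced (x @ c @ inv_word x)"
    using assms(1) z by simp
  have "i \<noteq> 0"
    using pow \<open>z \<noteq> []\<close> by (auto simp: fpow_def)
  moreover have "\<not> i < 0"
  proof
    assume "i < 0"
    then have "g @ (x @ c @ inv_word x) @ h = x @ concat (replicate (nat (- i)) (inv_word c)) @ inv_word x"
      using pow fpow_conj_neg[of x c i] assms(1) c z by simp
    then have "c = inv_word c"
      using factor_of_conj_power[OF fr_z _ \<open>x \<noteq> []\<close> \<open>c \<noteq> []\<close>] fr_c by simp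
    then show False
      using inv_word_fixed_imp_Nil fr_c c by metis
  qed
  ultimately have "0 < i"
    by simp
  then have "g @ (x @ c @ inv_word x) @ h = x @ concat (replicate (nat i) c) @ inv_word x"
    using pow fpow_conj_pos[of x c i] assms(1) c z by simp
  then show ?thesis
    using factor_of_conj_power[OF fr_z fr_c \<open>x \<noteq> []\<close> \<open>c \<noteq> []\<close>] \<open>0 < i\<close> by simp
qed

theorem lemma2p2:
  fixes A B :: "'a set" and b z g h :: "'a word" and i :: int
  assumes disj: "A \<inter> B = {}"
    and b_red: "freely_reduced b" and b_sub: "in_gen_subgroup (gens B) b"
    and z_in: "in_free_group (A \<union> B) z"
    and z_ne: "z \<noteq> []" and z_hd: "fst (hd z) \<in> A" and z_last: "fst (last z) \<in> A"
    and not_pp: "\<not> proper_power (A \<union> B) (fmult z b)"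
    and g_in: "in_free_group (A \<union> B) g" and h_in: "in_free_group (A \<union> B) h"
    and eq: "fpow (fmult z b) i = fmult g (fmult z h)"
    and red: "freely_reduced (g @ z @ h)"
  shows "i \<ge> 1 \<and> in_gen_subgroup {fmult z b} g"
proof -
  have b_A: "\<forall>l\<in>set b. fst l \<notin> A"
    using letters_in_gen_subgroup_gens[OF b_sub] disj by auto
  have z_red: "freely_reduced z"
    using z_in by (simp add: in_free_group_def)
  have w_red: "freely_reduced (z @ b)"
    using z_red b_red b_A z_last by (auto simp: freely_reduced_append) (metis fst_inv_letter hd_in_set)
  then have w: "fmult z b = z @ b" and pow: "fpow (z @ b) i = g @ z @ h"
    using eq red by (simp_all add: fmult_def reduce_append_reduce reduce_freely_reduced)
  show ?thesis
  proof (cases "cyclically_reduced (z @ b)")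
    case True
    have "in_free_group (A \<union> B) (z @ b)"
      using z_in w_red letters_in_gen_subgroup_gens[OF b_sub] by (auto simp: in_free_group_def)
    then have "\<not> (\<exists>s t. s \<noteq> [] \<and> t \<noteq> [] \<and> s @ t = t @ s \<and> z @ b = s @ t)"
      using not_pp w proper_power_if_commuting_factors by metis
    then obtain q where "0 < i" "g = concat (replicate q (z @ b))"
      using factor_of_power_cyclic[OF b_A z_red z_ne z_hd z_last True pow] by blast
    then show ?thesis
      using concat_replicate_in_gen_subgroup[OF True] w by simp
  next
    case False
    then have "b = []"
      using w_red b_A z_hd z_ne by (auto simp: cyclically_reduced_iff) (metis last_appendR last_in_set)
    then show ?thesis
      using factor_of_power_noncyclic[OF z_red z_ne, of i g h] pow False by (simp add: gen_one)
  qed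
qed

end
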